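(* Let $(V,\Omega)$ be a finite-dimensional real symplectic vector space and let $A:V\to V$ be a linear map with $\Omega(Ax,y)+\Omega(x,Ay)=0$ for all $x,y\in V$ and $A^2=+I$. Let $V_+=\ker(A-I)$, $V_-=\ker(A+I)$, so $V=V_+\oplus V_-$, and let $P_\pm:V\to V_\pm$, $z\mapsto z_\pm$, be the corresponding projections. Let $\theta^A$ be the one-form on $V$ given by $\theta^A_z(v_z)=\frac{1}{2}\Omega(z-Az,v)$, and let ${\rm Aut}(V,\theta^A)$ be the group of all diffeomorphisms $g:V\to V$ satisfying $g^*\theta^A=\theta^A$. Then the rule \[ g(z)=f(z_+)+\Bigl[\{f'_{z_+}\circ P_+\}^{\dagger}\Bigr]^{-1}(z_-) \qquad (z\in V)\] defines a group isomorphism ${\rm Diff}(V_+)\to{\rm Aut}(V,\theta^A)$, $f\mapsto g$, where ${\rm Diff}(V_+)$ is the group of all diffeomorphisms of $V_+$.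
   Context: $V$ is a finite-dimensional real vector space and $\Omega$ a nonsingular alternating bilinear form on $V$; $V_+$ and $V_-$ are then Lagrangian subspaces. For $z,v\in V$, $v_z\in T_zV$ denotes the tangent vector at $z$ corresponding to $v$ under the canonical identification $T_zV\cong V$. For a smooth map $g:V\to V$, $(g^*\theta^A)_z(v_z)=\frac12\Omega(g(z)-Ag(z),g'_z v)$, where $g'_z$ is the derivative of $g$ at $z$. For a linear map $B:V\to V$, its symplectic adjoint $B^\dagger$ is defined by $\Omega(B^\dagger x,y)=\Omega(x,By)$ for all $x,y\in V$. In the formula, $f'_{z_+}:V_+\to V_+$ is the derivative of $f$ at $z_+$, and $f'_{z_+}\circ P_+$ is regarded as a linear map $V\to V$ (with range in $V_+$); its symplectic adjoint restricts to a linear isomorphism of $V_-$ onto itself, and $[\,\cdot\,]^{-1}$ denotes the inverse of this restriction, applied to $z_-\in V_-$. *)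

theory Defs
  imports "HOL-Analysis.Analysis" "HOL-Library.FuncSet"
begin

fun ddiff :: "('a::real_normed_vector \<Rightarrow> 'b::real_normed_vector) \<Rightarrow> 'a list \<Rightarrow> 'a \<Rightarrow> 'b" where
  "ddiff f [] = f"
| "ddiff f (v # vs) = (\<lambda>x. frechet_derivative (ddiff f vs) (at x) v)"

definition smooth :: "('a::real_normed_vector \<Rightarrow> 'b::real_normed_vector) \<Rightarrow> bool" where
  "smooth f \<longleftrightarrow> (\<forall>vs. ddiff f vs differentiable_on UNIV)"

definition diffeo :: "('a::real_normed_vector \<Rightarrow> 'a) \<Rightarrow> bool" where
  "diffeo g \<longleftrightarrow> smooth g \<and> (\<exists>h. smooth h \<and> h \<circ> g = id \<and> g \<circ> h = id)"

definition symplectic_form :: "('a::real_vector \<Rightarrow> 'a \<Rightarrow> real) \<Rightarrow> bool" where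
  "symplectic_form \<Omega> \<longleftrightarrow> bilinear \<Omega> \<and> (\<forall>x. \<Omega> x x = 0)
      \<and> (\<forall>x. (\<forall>y. \<Omega> x y = 0) \<longrightarrow> x = 0)"

definition Vplus :: "('a::real_vector \<Rightarrow> 'a) \<Rightarrow> 'a set" where
  "Vplus A = {x. A x - x = 0}"

definition Vminus :: "('a::real_vector \<Rightarrow> 'a) \<Rightarrow> 'a set" where
  "Vminus A = {x. A x + x = 0}"

definition Pplus :: "('a::real_vector \<Rightarrow> 'a) \<Rightarrow> 'a \<Rightarrow> 'a" where
  "Pplus A z = (THE p. p \<in> Vplus A \<and> z - p \<in> Vminus A)"

definition Pminus :: "('a::real_vector \<Rightarrow> 'a) \<Rightarrow> 'a \<Rightarrow> 'a" where
  "Pminus A z = (THE m. m \<in> Vminus A \<and> z - m \<in> Vplus A)"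

definition sadj :: "('a::real_vector \<Rightarrow> 'a \<Rightarrow> real) \<Rightarrow> ('a \<Rightarrow> 'a) \<Rightarrow> 'a \<Rightarrow> 'a" where
  "sadj \<Omega> B = (THE C. linear C \<and> (\<forall>x y. \<Omega> (C x) y = \<Omega> x (B y)))"

text \<open>Diff(V+): maps f : V+ -> V+ represented extensionally on V+ (value undefined outside).
  Smoothness of a map on the subspace V+ is expressed as smoothness of f o P+ on V.\<close>
definition Diff_plus :: "('a::real_normed_vector \<Rightarrow> 'a) \<Rightarrow> ('a \<Rightarrow> 'a) set" where
  "Diff_plus A = {f. f \<in> Vplus A \<rightarrow> Vplus A \<and> f \<in> extensional (Vplus A)
      \<and> smooth (f \<circ> Pplus A)
      \<and> (\<exists>h. h \<in> Vplus A \<rightarrow> Vplus A \<and> smooth (h \<circ> Pplus A)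
             \<and> (\<forall>x\<in>Vplus A. h (f x) = x \<and> f (h x) = x))}"

definition pullback_theta :: "('a::real_normed_vector \<Rightarrow> 'a \<Rightarrow> real) \<Rightarrow> ('a \<Rightarrow> 'a) \<Rightarrow> ('a \<Rightarrow> 'a) \<Rightarrow> 'a \<Rightarrow> 'a \<Rightarrow> real" where
  "pullback_theta \<Omega> A g z v = (1/2) * \<Omega> (g z - A (g z)) (frechet_derivative g (at z) v)"

definition theta :: "('a::real_normed_vector \<Rightarrow> 'a \<Rightarrow> real) \<Rightarrow> ('a \<Rightarrow> 'a) \<Rightarrow> 'a \<Rightarrow> 'a \<Rightarrow> real" where
  "theta \<Omega> A z v = (1/2) * \<Omega> (z - A z) v"

definition Aut :: "('a::real_normed_vector \<Rightarrow> 'a \<Rightarrow> real) \<Rightarrow> ('a \<Rightarrow> 'a) \<Rightarrow> ('a \<Rightarrow> 'a) set" where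
  "Aut \<Omega> A = {g. diffeo g \<and> pullback_theta \<Omega> A g = theta \<Omega> A}"

text \<open>The lift f |-> g, g(z) = f(z+) + [(f'_{z+} o P+)^dagger |_{V-}]^{-1}(z-).
  The derivative of f o P+ at z+ is f'_{z+} o P+.\<close>
definition lift :: "('a::real_normed_vector \<Rightarrow> 'a \<Rightarrow> real) \<Rightarrow> ('a \<Rightarrow> 'a) \<Rightarrow> ('a \<Rightarrow> 'a) \<Rightarrow> 'a \<Rightarrow> 'a" where
  "lift \<Omega> A f z = f (Pplus A z)
     + (THE w. w \<in> Vminus A
          \<and> sadj \<Omega> (frechet_derivative (f \<circ> Pplus A) (at (Pplus A z))) w = Pminus A z)"

end

theory Submission
  imports Defs
begin

text \<open>
  Let f be a diffeomorphism of V+ with inverse h. On V- the inverse of (f'(y) \<circ> P+)^\<dagger> is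
  (h'(f y) \<circ> P+)^\<dagger>, so the lift is g z = f z+ + (h'(f z+) \<circ> P+)^\<dagger> z-, visibly a smooth map.
  Since \<theta>^A_z v = \<Omega> z- v and \<Omega> vanishes on V- \<times> V-, the identity g^* \<theta>^A = \<theta>^A reduces to
  the defining property of the adjoint. The chain rule and (B \<circ> C)^\<dagger> = C^\<dagger> \<circ> B^\<dagger> make
  f \<mapsto> g a homomorphism, so the lift of f^-1 inverts g; and g extends f, which gives injectivity.

  Conversely, g^* \<theta>^A = \<theta>^A says \<Omega> (g z)- (g'(z) v) = \<Omega> z- v. Differentiating once more and
  using the symmetry of second derivatives shows that g is symplectic (as d\<theta>^A = \<Omega>), which
  forces g'(z) z- = (g z)-. Hence t \<mapsto> (g (z+ + t z-))+ is constant, so g commutes with P+,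
  and then g is the lift of its restriction to V+.
\<close>

section \<open>Smooth maps\<close>

definition dir_deriv :: "('a::real_normed_vector \<Rightarrow> 'b::real_normed_vector) \<Rightarrow> 'a \<Rightarrow> 'a \<Rightarrow> 'b" where
  "dir_deriv f v = (\<lambda>x. frechet_derivative f (at x) v)"

lemma ddiff_append_single: "ddiff f (vs @ [v]) = ddiff (dir_deriv f v) vs"
  by (induction vs) (auto simp: dir_deriv_def)

lemma smooth_iff:
  "smooth f \<longleftrightarrow> f differentiable_on UNIV \<and> (\<forall>v. smooth (dir_deriv f v))"
proof
  show "smooth f \<Longrightarrow> f differentiable_on UNIV \<and> (\<forall>v. smooth (dir_deriv f v))"
    unfolding smooth_def by (metis ddiff.simps(1) ddiff_append_single)
next
  assume *: "f differentiable_on UNIV \<and> (\<forall>v. smooth (dir_deriv f v))"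
  show "smooth f"
    unfolding smooth_def
  proof
    fix vs show "ddiff f vs differentiable_on UNIV"
      using * by (induction vs rule: rev_induct) (auto simp: ddiff_append_single smooth_def)
  qed
qed

lemma smooth_coinduct:
  fixes f :: "'a::real_normed_vector \<Rightarrow> 'b::real_normed_vector"
  assumes "S f"
    and "\<And>f. S f \<Longrightarrow> f differentiable_on UNIV"
    and "\<And>f v. S f \<Longrightarrow> S (dir_deriv f v)"
  shows "smooth f"
proof -
  have "S (ddiff f vs)" if "S f" for f :: "'a \<Rightarrow> 'b" and vs
    using that by (induction vs arbitrary: f rule: rev_induct) (auto simp: ddiff_append_single assms(3))
  then show ?thesis
    using assms(1,2) unfolding smooth_def by blast
qed

lemma smooth_dir_deriv: "smooth f \<Longrightarrow> smooth (dir_deriv f v)"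
  using smooth_iff by blast

lemma smooth_has_derivative:
  "smooth f \<Longrightarrow> (f has_derivative frechet_derivative f (at x)) (at x)"
  by (metis UNIV_I differentiable_on_def frechet_derivative_works smooth_iff)

lemma smooth_continuous_at: "smooth f \<Longrightarrow> continuous (at x) f"
  using has_derivative_continuous smooth_has_derivative by blast

lemma dir_deriv_eq:
  "(\<And>x. (f has_derivative f' x) (at x)) \<Longrightarrow> dir_deriv f v = (\<lambda>x. f' x v)"
  unfolding dir_deriv_def by (metis frechet_derivative_at)

lemma has_derivative_imp_differentiable_on:
  "(\<And>x. (f has_derivative f' x) (at x)) \<Longrightarrow> f differentiable_on UNIV"
  unfolding differentiable_on_def differentiable_def by blast

lemma smooth_const: "smooth (\<lambda>x::'a::real_normed_vector. c::'b::real_normed_vector)"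
proof (rule smooth_coinduct[where S = "\<lambda>f. \<exists>c. f = (\<lambda>x. c)"])
  fix f :: "'a \<Rightarrow> 'b" and v
  assume "\<exists>c. f = (\<lambda>x. c)"
  then show "\<exists>c. dir_deriv f v = (\<lambda>x. c)"
    by (auto simp: dir_deriv_eq[of _ "\<lambda>x h. 0"])
qed auto

lemma smooth_bounded_linear:
  assumes "bounded_linear L"
  shows "smooth L"
proof -
  have L': "(L has_derivative L) (at x)" for x
    using assms by (rule bounded_linear_imp_has_derivative)
  then have "dir_deriv L v = (\<lambda>x. L v)" for v
    by (rule dir_deriv_eq)
  then show ?thesis
    unfolding smooth_iff[of L] using has_derivative_imp_differentiable_on[OF L'] smooth_const by auto
qed

lemma has_derivative_sum_list:
  "(\<And>p. p \<in> set ps \<Longrightarrow> (F p has_derivative F' p) (at x)) \<Longrightarrow>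
   ((\<lambda>x. \<Sum>p\<leftarrow>ps. F p x) has_derivative (\<lambda>h. \<Sum>p\<leftarrow>ps. F' p h)) (at x)"
  by (induction ps) (auto intro!: derivative_eq_intros)

lemma smooth_bilinear:
  assumes "bounded_bilinear \<beta>" and "smooth a" and "smooth b"
  shows "smooth (\<lambda>x. \<beta> (a x) (b x))"
proof -
  let ?S = "\<lambda>f. \<exists>ps. (\<forall>p\<in>set ps. smooth (fst p) \<and> smooth (snd p))
    \<and> f = (\<lambda>x. \<Sum>p\<leftarrow>ps. \<beta> (fst p x) (snd p x))"
  show ?thesis
  proof (rule smooth_coinduct[where S = ?S])
    show "?S (\<lambda>x. \<beta> (a x) (b x))"
      using assms(2,3) by (intro exI[of _ "[(a, b)]"]) simp
  next
    fix f v
    assume "?S f"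
    then obtain ps where ps: "\<forall>p\<in>set ps. smooth (fst p) \<and> smooth (snd p)"
      and f: "f = (\<lambda>x. \<Sum>p\<leftarrow>ps. \<beta> (fst p x) (snd p x))"
      by blast
    have f': "(f has_derivative (\<lambda>h. \<Sum>p\<leftarrow>ps. \<beta> (dir_deriv (fst p) h x) (snd p x)
        + \<beta> (fst p x) (dir_deriv (snd p) h x))) (at x)" for x
      unfolding f dir_deriv_def
      by (rule has_derivative_sum_list, rule bounded_bilinear.FDERIV[OF assms(1), THEN has_derivative_eq_rhs])
        (use ps smooth_has_derivative in \<open>auto simp: algebra_simps\<close>)
    then show "f differentiable_on UNIV"
      by (rule has_derivative_imp_differentiable_on)
    define ps' where "ps' = concat (map (\<lambda>p. [(dir_deriv (fst p) v, snd p), (fst p, dir_deriv (snd p) v)]) ps)"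
    have "dir_deriv f v = (\<lambda>x. \<Sum>p\<leftarrow>ps'. \<beta> (fst p x) (snd p x))"
      unfolding dir_deriv_eq[OF f'] ps'_def by (rule ext, induction ps) auto
    moreover have "\<forall>p\<in>set ps'. smooth (fst p) \<and> smooth (snd p)"
      using ps by (auto simp: ps'_def intro: smooth_dir_deriv)
    ultimately show "?S (dir_deriv f v)"
      by blast
  qed
qed

lemma smooth_mult: "smooth f \<Longrightarrow> smooth g \<Longrightarrow> smooth (\<lambda>x. f x * g x :: real)"
  by (rule smooth_bilinear[OF bounded_bilinear_mult])

lemma smooth_inner_const: "smooth f \<Longrightarrow> smooth (\<lambda>x. f x \<bullet> c)"
  by (rule smooth_bilinear[OF bounded_bilinear_inner _ smooth_const])

lemma smooth_add:
  assumes "smooth f" and "smooth g"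
  shows "smooth (\<lambda>x. f x + g x)"
proof (rule smooth_coinduct[where S = "\<lambda>h. \<exists>f g. smooth f \<and> smooth g \<and> h = (\<lambda>x. f x + g x)"])
  fix h v
  assume "\<exists>f g. smooth f \<and> smooth g \<and> h = (\<lambda>x. f x + g x)"
  then obtain f g where fg: "smooth f" "smooth g" and h: "h = (\<lambda>x. f x + g x)"
    by blast
  have h': "(h has_derivative (\<lambda>v. dir_deriv f v x + dir_deriv g v x)) (at x)" for x
    unfolding h dir_deriv_def by (intro has_derivative_add smooth_has_derivative fg)
  then show "h differentiable_on UNIV"
    by (rule has_derivative_imp_differentiable_on)
  show "\<exists>f g. smooth f \<and> smooth g \<and> dir_deriv h v = (\<lambda>x. f x + g x)"
    using fg smooth_dir_deriv dir_deriv_eq[OF h'] by blast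
qed (use assms in blast)

lemma smooth_sum:
  "finite I \<Longrightarrow> (\<And>i. i \<in> I \<Longrightarrow> smooth (f i)) \<Longrightarrow> smooth (\<lambda>x. \<Sum>i\<in>I. f i x)"
  by (induction I rule: finite_induct) (auto intro: smooth_add smooth_const)

lemma linear_eq_sum_Basis:
  fixes L :: "'a::euclidean_space \<Rightarrow> 'b::real_vector"
  assumes "linear L"
  shows "L w = (\<Sum>i\<in>Basis. (w \<bullet> i) *\<^sub>R L i)"
proof -
  have "L w = L (\<Sum>i\<in>Basis. (w \<bullet> i) *\<^sub>R i)"
    by (simp add: euclidean_representation)
  also have "\<dots> = (\<Sum>i\<in>Basis. (w \<bullet> i) *\<^sub>R L i)"
    using assms by (simp add: linear_sum linear_scale)
  finally show ?thesis .
qed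

lemma smooth_has_derivative_compose:
  "smooth k \<Longrightarrow> smooth g \<Longrightarrow> ((\<lambda>x. k (g x)) has_derivative
    (\<lambda>h. frechet_derivative k (at (g x)) (frechet_derivative g (at x) h))) (at x)"
  using diff_chain_at[OF smooth_has_derivative[of g] smooth_has_derivative[of k]] by (simp add: o_def)

lemma has_derivative_scaleR_compose:
  fixes k :: "'b::euclidean_space \<Rightarrow> 'c::real_normed_vector"
  assumes "smooth \<phi>" and "smooth k" and "smooth g" and "set bs = Basis" and "distinct bs"
  shows "((\<lambda>x. \<phi> x *\<^sub>R k (g x)) has_derivative (\<lambda>h. dir_deriv \<phi> h x *\<^sub>R k (g x)
    + (\<Sum>i\<leftarrow>bs. (\<phi> x * (dir_deriv g h x \<bullet> i)) *\<^sub>R dir_deriv k i (g x)))) (at x)"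
proof -
  have "linear (frechet_derivative k (at (g x)))"
    using assms(2) has_derivative_linear smooth_has_derivative by blast
  then have "\<phi> x *\<^sub>R frechet_derivative k (at (g x)) w
      = (\<Sum>i\<leftarrow>bs. (\<phi> x * (w \<bullet> i)) *\<^sub>R dir_deriv k i (g x))" for w
    using linear_eq_sum_Basis[of "frechet_derivative k (at (g x))" w] assms(4,5)
    by (simp add: dir_deriv_def scaleR_sum_right sum_list_distinct_conv_sum_set)
  moreover have "((\<lambda>x. \<phi> x *\<^sub>R k (g x)) has_derivative (\<lambda>h. dir_deriv \<phi> h x *\<^sub>R k (g x)
      + \<phi> x *\<^sub>R frechet_derivative k (at (g x)) (dir_deriv g h x))) (at x)"
    unfolding dir_deriv_def
    by (rule has_derivative_scaleR[OF smooth_has_derivative[OF assms(1)]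
          smooth_has_derivative_compose[OF assms(2,3)], THEN has_derivative_eq_rhs])
      (simp add: algebra_simps)
  ultimately show ?thesis
    by simp
qed

lemma smooth_compose:
  fixes k :: "'b::euclidean_space \<Rightarrow> 'c::real_normed_vector" and g :: "'a::real_normed_vector \<Rightarrow> 'b"
  assumes "smooth k" and "smooth g"
  shows "smooth (\<lambda>x. k (g x))"
proof -
  obtain bs :: "'b list" where bs: "set bs = Basis" "distinct bs"
    using finite_distinct_list[OF finite_Basis] by blast
  \<comment> \<open>all derivatives of \<open>k \<circ> g\<close> are sums of terms \<open>\<phi> x *\<^sub>R k' (g x)\<close> with smooth \<open>\<phi>\<close> and \<open>k'\<close>\<close>
  let ?S = "\<lambda>f. \<exists>ts. (\<forall>t\<in>set ts. smooth (fst t) \<and> smooth (snd t))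
    \<and> f = (\<lambda>x. \<Sum>t\<leftarrow>ts. fst t x *\<^sub>R snd t (g x))"
  show ?thesis
  proof (rule smooth_coinduct[where S = ?S])
    show "?S (\<lambda>x. k (g x))"
      using assms(1) smooth_const by (intro exI[of _ "[(\<lambda>x. 1, k)]"]) auto
  next
    fix f :: "'a \<Rightarrow> 'c" and v
    assume "?S f"
    then obtain ts where ts: "\<forall>t\<in>set ts. smooth (fst t) \<and> smooth (snd t)"
      and f: "f = (\<lambda>x. \<Sum>t\<leftarrow>ts. fst t x *\<^sub>R snd t (g x))"
      by blast
    have f': "(f has_derivative (\<lambda>h. \<Sum>t\<leftarrow>ts. dir_deriv (fst t) h x *\<^sub>R snd t (g x)
      + (\<Sum>i\<leftarrow>bs. (fst t x * (dir_deriv g h x \<bullet> i)) *\<^sub>R dir_deriv (snd t) i (g x)))) (at x)" for x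
      unfolding f using ts assms(2) bs by (intro has_derivative_sum_list has_derivative_scaleR_compose) auto
    then show "f differentiable_on UNIV"
      by (rule has_derivative_imp_differentiable_on)
    define ts' where "ts' = concat (map (\<lambda>t. (dir_deriv (fst t) v, snd t)
      # map (\<lambda>i. (\<lambda>x. fst t x * (dir_deriv g v x \<bullet> i), dir_deriv (snd t) i)) bs) ts)"
    have "dir_deriv f v = (\<lambda>x. \<Sum>t\<leftarrow>ts'. fst t x *\<^sub>R snd t (g x))"
      unfolding dir_deriv_eq[OF f'] ts'_def by (rule ext, induction ts) (auto simp: o_def)
    moreover have "\<forall>t\<in>set ts'. smooth (fst t) \<and> smooth (snd t)"
      using ts by (auto simp: ts'_def intro!: smooth_dir_deriv smooth_mult smooth_inner_const assms(2))
    ultimately show "?S (dir_deriv f v)"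
      by blast
  qed
qed

lemma has_real_derivative_along_line:
  fixes H :: "'a::euclidean_space \<Rightarrow> 'b::euclidean_space"
  assumes "smooth H"
  shows "((\<lambda>r. H (p + r *\<^sub>R u) \<bullet> e) has_real_derivative (dir_deriv H u (p + r *\<^sub>R u) \<bullet> e)) (at r)"
proof -
  have "((\<lambda>r. p + r *\<^sub>R u) has_derivative (\<lambda>t. t *\<^sub>R u)) (at r)"
    by (auto intro!: derivative_eq_intros)
  from diff_chain_at[OF this smooth_has_derivative[OF assms]]
  have "((\<lambda>r. H (p + r *\<^sub>R u) \<bullet> e) has_derivative
      (\<lambda>t. frechet_derivative H (at (p + r *\<^sub>R u)) (t *\<^sub>R u) \<bullet> e)) (at r)"
    by (intro bounded_linear.has_derivative[OF bounded_linear_inner_left]) (simp add: o_def)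
  moreover have "linear (frechet_derivative H (at (p + r *\<^sub>R u)))"
    using smooth_has_derivative[OF assms] has_derivative_linear by blast
  ultimately show ?thesis
    by (auto simp: dir_deriv_def linear_scale has_derivative_imp_has_field_derivative)
qed

lemma second_difference_mean_value:
  fixes G :: "'a::euclidean_space \<Rightarrow> 'b::euclidean_space"
  assumes "smooth G" and "s > 0"
  obtains r q where "0 < r" "r < s" "0 < q" "q < s"
    "G (z + s *\<^sub>R u + s *\<^sub>R v) \<bullet> e - G (z + s *\<^sub>R u) \<bullet> e - G (z + s *\<^sub>R v) \<bullet> e + G z \<bullet> e
      = s * s * (dir_deriv (dir_deriv G u) v (z + r *\<^sub>R u + q *\<^sub>R v) \<bullet> e)"
proof -
  define \<phi> where "\<phi> r = G ((z + s *\<^sub>R v) + r *\<^sub>R u) \<bullet> e - G (z + r *\<^sub>R u) \<bullet> e" for r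
  have d\<phi>: "DERIV \<phi> r :> dir_deriv G u ((z + s *\<^sub>R v) + r *\<^sub>R u) \<bullet> e - dir_deriv G u (z + r *\<^sub>R u) \<bullet> e" for r
    unfolding \<phi>_def by (intro DERIV_diff has_real_derivative_along_line assms(1))
  obtain r where r: "0 < r" "r < s" and \<phi>:
    "\<phi> s - \<phi> 0 = (s - 0) * (dir_deriv G u ((z + s *\<^sub>R v) + r *\<^sub>R u) \<bullet> e - dir_deriv G u (z + r *\<^sub>R u) \<bullet> e)"
    using MVT2[OF assms(2) d\<phi>] by blast
  define \<psi> where "\<psi> q = dir_deriv G u ((z + r *\<^sub>R u) + q *\<^sub>R v) \<bullet> e" for q
  have d\<psi>: "DERIV \<psi> q :> dir_deriv (dir_deriv G u) v ((z + r *\<^sub>R u) + q *\<^sub>R v) \<bullet> e" for q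
    unfolding \<psi>_def by (intro has_real_derivative_along_line smooth_dir_deriv assms(1))
  obtain q where q: "0 < q" "q < s" and \<psi>:
    "\<psi> s - \<psi> 0 = (s - 0) * (dir_deriv (dir_deriv G u) v ((z + r *\<^sub>R u) + q *\<^sub>R v) \<bullet> e)"
    using MVT2[OF assms(2) d\<psi>] by blast
  have "\<phi> s - \<phi> 0 = s * (\<psi> s - \<psi> 0)"
    unfolding \<phi> \<psi>_def by (simp add: algebra_simps)
  with \<phi> \<psi> r q show ?thesis
    by (intro that[of r q]) (auto simp: \<phi>_def algebra_simps)
qed

lemma second_difference_quotient_tendsto:
  fixes G :: "'a::euclidean_space \<Rightarrow> 'b::euclidean_space"
  assumes "smooth G"
  shows "((\<lambda>s. (G (z + s *\<^sub>R u + s *\<^sub>R v) \<bullet> e - G (z + s *\<^sub>R u) \<bullet> e - G (z + s *\<^sub>R v) \<bullet> e + G z \<bullet> e)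
    / (s * s)) \<longlongrightarrow> dir_deriv (dir_deriv G u) v z \<bullet> e) (at_right 0)"
proof (rule tendstoI)
  fix \<epsilon> :: real
  assume "\<epsilon> > 0"
  let ?F = "\<lambda>x. dir_deriv (dir_deriv G u) v x \<bullet> e"
  have "continuous (at z) ?F"
    by (intro continuous_intros smooth_continuous_at smooth_dir_deriv assms)
  then obtain \<delta> where "\<delta> > 0" and \<delta>: "\<And>x. dist x z < \<delta> \<Longrightarrow> dist (?F x) (?F z) < \<epsilon>"
    using \<open>\<epsilon> > 0\<close> unfolding continuous_at_eps_delta by blast
  define s\<^sub>0 where "s\<^sub>0 = \<delta> / (norm u + norm v + 1)"
  have "s\<^sub>0 > 0"
    using \<open>\<delta> > 0\<close> by (simp add: s\<^sub>0_def add_nonneg_pos)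
  have "dist ((G (z + s *\<^sub>R u + s *\<^sub>R v) \<bullet> e - G (z + s *\<^sub>R u) \<bullet> e - G (z + s *\<^sub>R v) \<bullet> e + G z \<bullet> e)
    / (s * s)) (?F z) < \<epsilon>" if "0 < s" "s < s\<^sub>0" for s
  proof -
    obtain r q where "0 < r" "r < s" "0 < q" "q < s" and mvt:
      "G (z + s *\<^sub>R u + s *\<^sub>R v) \<bullet> e - G (z + s *\<^sub>R u) \<bullet> e - G (z + s *\<^sub>R v) \<bullet> e + G z \<bullet> e
        = s * s * ?F (z + r *\<^sub>R u + q *\<^sub>R v)"
      using second_difference_mean_value[OF assms \<open>0 < s\<close>] by metis
    have "dist (z + r *\<^sub>R u + q *\<^sub>R v) z \<le> r * norm u + q * norm v"
      using norm_triangle_ineq[of "r *\<^sub>R u" "q *\<^sub>R v"] \<open>0 < r\<close> \<open>0 < q\<close> by (simp add: dist_norm)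
    also have "\<dots> \<le> s\<^sub>0 * norm u + s\<^sub>0 * norm v"
      using \<open>r < s\<close> \<open>q < s\<close> \<open>s < s\<^sub>0\<close> by (intro add_mono mult_right_mono) auto
    also have "\<dots> < s\<^sub>0 * (norm u + norm v + 1)"
      using \<open>s\<^sub>0 > 0\<close> by (simp add: algebra_simps)
    also have "\<dots> = \<delta>"
      unfolding s\<^sub>0_def by (smt (verit) norm_ge_zero nonzero_eq_divide_eq)
    finally show ?thesis
      using \<delta> mvt \<open>0 < s\<close> by simp
  qed
  then show "\<forall>\<^sub>F s in at_right 0. dist ((G (z + s *\<^sub>R u + s *\<^sub>R v) \<bullet> e - G (z + s *\<^sub>R u) \<bullet> e
      - G (z + s *\<^sub>R v) \<bullet> e + G z \<bullet> e) / (s * s)) (?F z) < \<epsilon>"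
    unfolding eventually_at_right_field using \<open>s\<^sub>0 > 0\<close> by auto
qed

lemma dir_deriv_commute:
  fixes G :: "'a::euclidean_space \<Rightarrow> 'b::euclidean_space"
  assumes "smooth G"
  shows "dir_deriv (dir_deriv G u) v z = dir_deriv (dir_deriv G v) u z"
proof (rule euclidean_eqI)
  fix e :: 'b
  have swap: "(\<lambda>s. (G (z + s *\<^sub>R v + s *\<^sub>R u) \<bullet> e - G (z + s *\<^sub>R v) \<bullet> e - G (z + s *\<^sub>R u) \<bullet> e + G z \<bullet> e) / (s * s))
      = (\<lambda>s. (G (z + s *\<^sub>R u + s *\<^sub>R v) \<bullet> e - G (z + s *\<^sub>R u) \<bullet> e - G (z + s *\<^sub>R v) \<bullet> e + G z \<bullet> e) / (s * s))"
    by (simp add: algebra_simps)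
  show "dir_deriv (dir_deriv G u) v z \<bullet> e = dir_deriv (dir_deriv G v) u z \<bullet> e"
    using trivial_limit_at_right_real second_difference_quotient_tendsto[OF assms, of z u v e]
      second_difference_quotient_tendsto[OF assms, of z v u e, unfolded swap]
    by (rule tendsto_unique)
qed

lemma diffeo_dir_deriv_surj:
  assumes "diffeo g"
  shows "\<exists>v. dir_deriv g v z = w"
proof -
  obtain h where "smooth g" "smooth h" "h \<circ> g = id" "g \<circ> h = id"
    using assms by (auto simp: diffeo_def)
  then have "h (g z) = z" and "(\<lambda>y. g (h y)) = (\<lambda>y. y)"
    by (simp_all add: fun_eq_iff pointfree_idE)
  then have "((\<lambda>y. y) has_derivative (\<lambda>u. dir_deriv g (frechet_derivative h (at (g z)) u) z)) (at (g z))"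
    using smooth_has_derivative_compose[OF \<open>smooth g\<close> \<open>smooth h\<close>, of "g z"] by (simp add: dir_deriv_def)
  then have "(\<lambda>u. dir_deriv g (frechet_derivative h (at (g z)) u) z) = (\<lambda>u. u)"
    using has_derivative_ident has_derivative_unique by blast
  then show ?thesis
    by metis
qed

section \<open>The symplectic adjoint\<close>

locale symplectic_space =
  fixes \<Omega> :: "'a::euclidean_space \<Rightarrow> 'a \<Rightarrow> real"
  assumes symplectic: "symplectic_form \<Omega>"
begin

lemma bounded_bilinear_Omega: "bounded_bilinear \<Omega>"
  using symplectic bilinear_conv_bounded_bilinear by (auto simp: symplectic_form_def)

lemmas Omega_simps =
  bounded_bilinear.add_left[OF bounded_bilinear_Omega] bounded_bilinear.add_right[OF bounded_bilinear_Omega]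
  bounded_bilinear.diff_left[OF bounded_bilinear_Omega] bounded_bilinear.diff_right[OF bounded_bilinear_Omega]
  bounded_bilinear.minus_left[OF bounded_bilinear_Omega] bounded_bilinear.minus_right[OF bounded_bilinear_Omega]
  bounded_bilinear.scaleR_left[OF bounded_bilinear_Omega] bounded_bilinear.scaleR_right[OF bounded_bilinear_Omega]
  bounded_bilinear.zero_left[OF bounded_bilinear_Omega] bounded_bilinear.zero_right[OF bounded_bilinear_Omega]
  bounded_bilinear.sum_left[OF bounded_bilinear_Omega] bounded_bilinear.sum_right[OF bounded_bilinear_Omega]

lemma Omega_antisym: "\<Omega> x y = - \<Omega> y x"
proof -
  have "\<Omega> (x + y) (x + y) = \<Omega> x x + \<Omega> x y + \<Omega> y x + \<Omega> y y"
    by (simp add: Omega_simps)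
  then show ?thesis
    using symplectic by (simp add: symplectic_form_def)
qed

lemma Omega_eqI: "(\<And>y. \<Omega> x y = \<Omega> x' y) \<Longrightarrow> x = x'"
  using symplectic unfolding symplectic_form_def by (metis bounded_bilinear.diff_left[OF bounded_bilinear_Omega] eq_iff_diff_eq_0)

lemma Omega_riesz: "\<exists>K. \<forall>u y. \<Omega> (K u) y = u \<bullet> y"
proof -
  define J where "J x = (\<Sum>i\<in>Basis. \<Omega> x i *\<^sub>R i)" for x
  have J: "J x \<bullet> y = \<Omega> x y" for x y
  proof -
    have "\<Omega> x y = \<Omega> x (\<Sum>i\<in>Basis. (y \<bullet> i) *\<^sub>R i)"
      by (simp add: euclidean_representation)
    also have "\<dots> = (\<Sum>i\<in>Basis. \<Omega> x i * (i \<bullet> y))"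
      by (simp add: Omega_simps inner_commute mult.commute)
    also have "\<dots> = J x \<bullet> y"
      by (simp add: J_def inner_sum_left)
    finally show ?thesis ..
  qed
  have "linear J"
    unfolding J_def by (intro linearI) (simp_all add: Omega_simps scaleR_add_left sum.distrib scaleR_sum_right)
  moreover have "inj J"
    by (rule injI, rule Omega_eqI) (metis J)
  ultimately have "surj J"
    using linear_injective_imp_surjective by blast
  then show ?thesis
    using J by (metis surj_f_inv_f)
qed

lemma Omega_sum_riesz:
  assumes "\<And>u y. \<Omega> (K u) y = u \<bullet> y" and "linear B"
  shows "\<Omega> (\<Sum>j\<in>Basis. \<Omega> x (B j) *\<^sub>R K j) y = \<Omega> x (B y)"
proof -
  have "\<Omega> (\<Sum>j\<in>Basis. \<Omega> x (B j) *\<^sub>R K j) y = (\<Sum>j\<in>Basis. \<Omega> x (B j) * (j \<bullet> y))"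
    by (simp add: Omega_simps assms(1))
  also have "\<dots> = (\<Sum>j\<in>Basis. (y \<bullet> j) * \<Omega> x (B j))"
    by (simp only: inner_commute[of _ y] mult.commute)
  also have "\<dots> = \<Omega> x (\<Sum>j\<in>Basis. (y \<bullet> j) *\<^sub>R B j)"
    by (simp add: Omega_simps)
  also have "\<dots> = \<Omega> x (B y)"
    by (simp only: linear_eq_sum_Basis[OF assms(2), symmetric])
  finally show ?thesis .
qed

lemma sadj_unique:
  assumes "linear B"
  shows "\<exists>!C. linear C \<and> (\<forall>x y. \<Omega> (C x) y = \<Omega> x (B y))"
proof -
  obtain K where K: "\<And>u y. \<Omega> (K u) y = u \<bullet> y"
    using Omega_riesz by blast
  define C where "C x = (\<Sum>j\<in>Basis. \<Omega> x (B j) *\<^sub>R K j)" for x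
  have "\<Omega> (C x) y = \<Omega> x (B y)" for x y
    unfolding C_def by (rule Omega_sum_riesz[OF K assms])
  moreover have "linear C"
    unfolding C_def by (intro linearI) (simp_all add: Omega_simps scaleR_add_left sum.distrib scaleR_sum_right)
  moreover have "C' = C" if "\<forall>x y. \<Omega> (C' x) y = \<Omega> x (B y)" for C'
    using that calculation(1) by (metis ext Omega_eqI)
  ultimately show ?thesis
    by blast
qed

lemma
  assumes "linear B"
  shows linear_sadj: "linear (sadj \<Omega> B)"
    and sadj_adjoint: "\<Omega> (sadj \<Omega> B x) y = \<Omega> x (B y)"
  using theI'[OF sadj_unique[OF assms]] unfolding sadj_def by auto

lemma sadj_eqI: "linear B \<Longrightarrow> (\<And>y. \<Omega> w y = \<Omega> x (B y)) \<Longrightarrow> sadj \<Omega> B x = w"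
  by (rule Omega_eqI) (simp add: sadj_adjoint)

lemma sadj_eq_sum:
  "(\<And>u y. \<Omega> (K u) y = u \<bullet> y) \<Longrightarrow> linear B \<Longrightarrow> sadj \<Omega> B x = (\<Sum>j\<in>Basis. \<Omega> x (B j) *\<^sub>R K j)"
  by (rule sadj_eqI) (simp_all add: Omega_sum_riesz)

lemma sadj_compose:
  assumes "linear X" and "linear Y"
  shows "sadj \<Omega> (\<lambda>v. X (Y v)) x = sadj \<Omega> Y (sadj \<Omega> X x)"
  using linear_compose[OF assms(2,1)] assms
  by (intro sadj_eqI) (simp_all add: o_def sadj_adjoint)

end

section \<open>The splitting into \<open>Vplus A\<close> and \<open>Vminus A\<close>\<close>

locale skew_involution = symplectic_space +
  fixes A :: "'a::euclidean_space \<Rightarrow> 'a"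
  assumes linear_A: "linear A"
    and A_skew: "\<forall>x y. \<Omega> (A x) y + \<Omega> x (A y) = 0"
    and A_involution: "A \<circ> A = id"
begin

lemma A_A [simp]: "A (A x) = x"
  using A_involution by (metis comp_apply id_apply)

lemmas A_simps = linear_add[OF linear_A] linear_diff[OF linear_A] linear_scale[OF linear_A]

lemma Vplus_iff: "x \<in> Vplus A \<longleftrightarrow> A x = x"
  by (simp add: Vplus_def)

lemma Vminus_iff: "x \<in> Vminus A \<longleftrightarrow> A x = - x"
  by (simp add: Vminus_def eq_neg_iff_add_eq_0)

lemma half_sum_add_half_diff: "(1/2) *\<^sub>R (z + A z) + (1/2) *\<^sub>R (z - A z) = z"
proof -
  have "(z + A z) + (z - A z) = z + z"
    by simp
  then show ?thesis
    by (metis scaleR_add_right scaleR_half_double)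
qed

lemma half_sum_in_Vplus: "(1/2) *\<^sub>R (z + A z) \<in> Vplus A"
  and half_diff_in_Vminus: "(1/2) *\<^sub>R (z - A z) \<in> Vminus A"
  by (simp_all add: Vplus_iff Vminus_iff A_simps algebra_simps)

lemma Pplus_eq: "Pplus A z = (1/2) *\<^sub>R (z + A z)"
  unfolding Pplus_def
proof (rule the_equality)
  show "(1/2) *\<^sub>R (z + A z) \<in> Vplus A \<and> z - (1/2) *\<^sub>R (z + A z) \<in> Vminus A"
    using half_sum_in_Vplus half_diff_in_Vminus half_sum_add_half_diff[of z]
    by (metis add_diff_cancel_left')
next
  fix p
  assume "p \<in> Vplus A \<and> z - p \<in> Vminus A"
  then have "A p = p" "A z - A p = p - z"
    by (auto simp: Vplus_iff Vminus_iff A_simps)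
  then have "z + A z = p + p"
    by (simp add: algebra_simps)
  then show "p = (1/2) *\<^sub>R (z + A z)"
    by simp
qed

lemma Pminus_eq: "Pminus A z = (1/2) *\<^sub>R (z - A z)"
  unfolding Pminus_def
proof (rule the_equality)
  show "(1/2) *\<^sub>R (z - A z) \<in> Vminus A \<and> z - (1/2) *\<^sub>R (z - A z) \<in> Vplus A"
    using half_sum_in_Vplus half_diff_in_Vminus half_sum_add_half_diff[of z]
    by (metis add_diff_cancel_right')
next
  fix m
  assume "m \<in> Vminus A \<and> z - m \<in> Vplus A"
  then have "A m = - m" "A z - A m = z - m"
    by (auto simp: Vplus_iff Vminus_iff A_simps)
  then have "z - A z = m + m"
    by (simp add: algebra_simps)
  then show "m = (1/2) *\<^sub>R (z - A z)"
    by simp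
qed

lemma linear_Pplus: "linear (Pplus A)"
  unfolding Pplus_eq by (intro linearI) (simp_all add: A_simps algebra_simps)

lemma linear_Pminus: "linear (Pminus A)"
  unfolding Pminus_eq by (intro linearI) (simp_all add: A_simps algebra_simps)

lemma bounded_linear_Pplus: "bounded_linear (Pplus A)"
  using linear_Pplus linear_conv_bounded_linear by blast

lemma bounded_linear_Pminus: "bounded_linear (Pminus A)"
  using linear_Pminus linear_conv_bounded_linear by blast

lemmas P_simps = linear_add[OF linear_Pplus] linear_add[OF linear_Pminus]
  linear_scale[OF linear_Pplus] linear_scale[OF linear_Pminus]
  linear_0[OF linear_Pplus] linear_0[OF linear_Pminus]

lemma Pplus_add_Pminus: "Pplus A z + Pminus A z = z"
  unfolding Pplus_eq Pminus_eq by (rule half_sum_add_half_diff)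

lemma Pplus_in_Vplus [simp]: "Pplus A z \<in> Vplus A"
  and Pminus_in_Vminus [simp]: "Pminus A z \<in> Vminus A"
  unfolding Pplus_eq Pminus_eq by (rule half_sum_in_Vplus half_diff_in_Vminus)+

lemma Vplus_iff_Pminus: "x \<in> Vplus A \<longleftrightarrow> Pminus A x = 0"
  by (auto simp: Vplus_iff Pminus_eq)

lemma Vminus_iff_Pplus: "x \<in> Vminus A \<longleftrightarrow> Pplus A x = 0"
  by (simp add: Vminus_def Pplus_eq add.commute[of x])

lemma Pplus_Vplus [simp]: "x \<in> Vplus A \<Longrightarrow> Pplus A x = x"
  and Pminus_Vplus [simp]: "x \<in> Vplus A \<Longrightarrow> Pminus A x = 0"
  and Pplus_Vminus [simp]: "x \<in> Vminus A \<Longrightarrow> Pplus A x = 0"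
  and Pminus_Vminus [simp]: "x \<in> Vminus A \<Longrightarrow> Pminus A x = x"
  using Pplus_add_Pminus[of x] by (auto simp: Vplus_iff_Pminus Vminus_iff_Pplus)

lemma Omega_Vplus: "x \<in> Vplus A \<Longrightarrow> y \<in> Vplus A \<Longrightarrow> \<Omega> x y = 0"
  using A_skew[rule_format, of x y] by (simp add: Vplus_iff)

lemma Omega_Vminus: "x \<in> Vminus A \<Longrightarrow> y \<in> Vminus A \<Longrightarrow> \<Omega> x y = 0"
  using A_skew[rule_format, of x y] by (simp add: Vminus_iff Omega_simps)

lemma Omega_decompose: "\<Omega> x y = \<Omega> (Pplus A x) (Pminus A y) + \<Omega> (Pminus A x) (Pplus A y)"
proof -
  have "\<Omega> x y = \<Omega> (Pplus A x + Pminus A x) (Pplus A y + Pminus A y)"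
    by (simp only: Pplus_add_Pminus)
  then show ?thesis
    by (simp add: Omega_simps Omega_Vplus Omega_Vminus)
qed

lemma Omega_Vminus_left: "x \<in> Vminus A \<Longrightarrow> \<Omega> x u = \<Omega> x (Pplus A u)"
  using Omega_decompose[of x u] by (simp add: Omega_simps)

lemma Vminus_if_Omega_zero:
  assumes "\<And>y. y \<in> Vminus A \<Longrightarrow> \<Omega> w y = 0"
  shows "w \<in> Vminus A"
proof -
  have "\<Omega> (Pplus A w) y = \<Omega> 0 y" for y
    using Omega_decompose[of "Pplus A w" y] Omega_decompose[of w "Pminus A y"] assms[of "Pminus A y"]
    by (simp add: Omega_simps)
  then show ?thesis
    unfolding Vminus_iff_Pplus by (rule Omega_eqI)
qed

lemma Omega_Pminus_skew: "\<Omega> (Pminus A x) y - \<Omega> (Pminus A y) x = \<Omega> x y"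
  using Omega_decompose[of x y] Omega_Vminus_left[of "Pminus A x" y]
    Omega_Vminus_left[of "Pminus A y" x] Omega_antisym[of "Pminus A y" "Pplus A x"]
  by simp

lemma theta_eq: "theta \<Omega> A z v = \<Omega> (Pminus A z) v"
  by (simp add: theta_def Pminus_eq Omega_simps)

lemma pullback_theta_eq:
  "pullback_theta \<Omega> A g z v = \<Omega> (Pminus A (g z)) (frechet_derivative g (at z) v)"
  by (simp add: pullback_theta_def Pminus_eq Omega_simps)

end

section \<open>Lifting diffeomorphisms of \<open>Vplus A\<close>\<close>

context skew_involution
begin

text \<open>\<open>deriv_plus f y\<close> is the map \<open>f'(y) \<circ> P+\<close> of the paper; only the values of \<open>f\<close> on
  \<open>Vplus A\<close> matter.\<close>

definition deriv_plus :: "('a \<Rightarrow> 'a) \<Rightarrow> 'a \<Rightarrow> 'a \<Rightarrow> 'a" where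
  "deriv_plus f y = frechet_derivative (f \<circ> Pplus A) (at y)"

definition smooth_plus :: "('a \<Rightarrow> 'a) \<Rightarrow> bool" where
  "smooth_plus f \<longleftrightarrow> (\<forall>x\<in>Vplus A. f x \<in> Vplus A) \<and> smooth (f \<circ> Pplus A)"

lemma smooth_plus_Vplus: "smooth_plus f \<Longrightarrow> x \<in> Vplus A \<Longrightarrow> f x \<in> Vplus A"
  by (simp add: smooth_plus_def)

lemma smooth_plus_smooth: "smooth_plus f \<Longrightarrow> smooth (f \<circ> Pplus A)"
  by (simp add: smooth_plus_def)

lemma has_derivative_deriv_plus:
  "smooth (f \<circ> Pplus A) \<Longrightarrow> ((f \<circ> Pplus A) has_derivative deriv_plus f y) (at y)"
  unfolding deriv_plus_def by (rule smooth_has_derivative)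

lemma linear_deriv_plus: "smooth (f \<circ> Pplus A) \<Longrightarrow> linear (deriv_plus f y)"
  using has_derivative_deriv_plus has_derivative_linear by blast

lemma deriv_plus_Pplus:
  assumes "smooth (f \<circ> Pplus A)"
  shows "deriv_plus f y v = deriv_plus f (Pplus A y) (Pplus A v)"
proof -
  have "(f \<circ> Pplus A) \<circ> Pplus A = f \<circ> Pplus A"
    by (simp add: fun_eq_iff)
  moreover have "(((f \<circ> Pplus A) \<circ> Pplus A) has_derivative deriv_plus f (Pplus A y) \<circ> Pplus A) (at y)"
    using bounded_linear_imp_has_derivative[OF bounded_linear_Pplus] has_derivative_deriv_plus[OF assms]
    by (rule diff_chain_at)
  ultimately have "((f \<circ> Pplus A) has_derivative deriv_plus f (Pplus A y) \<circ> Pplus A) (at y)"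
    by (simp only:)
  then have "deriv_plus f y = deriv_plus f (Pplus A y) \<circ> Pplus A"
    by (rule has_derivative_unique[OF has_derivative_deriv_plus[OF assms]])
  then show ?thesis
    by simp
qed

lemma deriv_plus_Vminus: "smooth (f \<circ> Pplus A) \<Longrightarrow> v \<in> Vminus A \<Longrightarrow> deriv_plus f y v = 0"
  using deriv_plus_Pplus[of f y v] linear_0[OF linear_deriv_plus[of f "Pplus A y"]] by simp

lemma deriv_plus_id: "deriv_plus (\<lambda>x. x) y = Pplus A"
  unfolding deriv_plus_def o_def
  using bounded_linear_imp_has_derivative[OF bounded_linear_Pplus] by (metis frechet_derivative_at)

lemma deriv_plus_compose:
  assumes "smooth_plus f" and "smooth_plus h"
  shows "deriv_plus (\<lambda>x. f (h x)) y v = deriv_plus f (h (Pplus A y)) (deriv_plus h y v)"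
proof -
  have "(\<lambda>x. f (h x)) \<circ> Pplus A = (f \<circ> Pplus A) \<circ> (h \<circ> Pplus A)"
    using smooth_plus_Vplus[OF assms(2)] by (simp add: fun_eq_iff)
  moreover have "(((f \<circ> Pplus A) \<circ> (h \<circ> Pplus A)) has_derivative
      deriv_plus f (h (Pplus A y)) \<circ> deriv_plus h y) (at y)"
    by (rule diff_chain_at[OF has_derivative_deriv_plus[OF smooth_plus_smooth[OF assms(2)]]])
      (use has_derivative_deriv_plus[OF smooth_plus_smooth[OF assms(1)]] in simp)
  ultimately show ?thesis
    unfolding deriv_plus_def by (metis frechet_derivative_at comp_apply)
qed

lemma deriv_plus_inverse:
  assumes "smooth_plus f" and "smooth_plus h" and "\<And>x. x \<in> Vplus A \<Longrightarrow> h (f x) = x"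
    and "y \<in> Vplus A"
  shows "deriv_plus h (f y) (deriv_plus f y v) = Pplus A v"
proof -
  have "deriv_plus (\<lambda>x. h (f x)) = deriv_plus (\<lambda>x. x)"
    unfolding deriv_plus_def using assms(3) by (simp add: o_def)
  then show ?thesis
    using deriv_plus_compose[OF assms(2,1), of y v] assms(4) by (simp add: deriv_plus_id)
qed

lemma sadj_Pplus: "sadj \<Omega> (Pplus A) x = Pminus A x"
  using Omega_decompose[of x] Omega_Vminus_left[OF Pminus_in_Vminus, of x]
  by (intro sadj_eqI linear_Pplus) (simp add: Omega_simps)

lemma sadj_deriv_plus_Vminus:
  assumes "smooth (f \<circ> Pplus A)"
  shows "sadj \<Omega> (deriv_plus f y) x \<in> Vminus A"
  using assms by (intro Vminus_if_Omega_zero) (simp add: sadj_adjoint linear_deriv_plus deriv_plus_Vminus Omega_simps)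

lemma sadj_deriv_plus_inverse:
  assumes "smooth_plus f" and "smooth_plus h" and "\<And>x. x \<in> Vplus A \<Longrightarrow> h (f x) = x"
    and "y \<in> Vplus A" and "x \<in> Vminus A"
  shows "sadj \<Omega> (deriv_plus f y) (sadj \<Omega> (deriv_plus h (f y)) x) = x"
proof -
  have "sadj \<Omega> (deriv_plus f y) (sadj \<Omega> (deriv_plus h (f y)) x)
      = sadj \<Omega> (\<lambda>v. deriv_plus h (f y) (deriv_plus f y v)) x"
    using assms(1,2) by (intro sadj_compose[symmetric] linear_deriv_plus smooth_plus_smooth)
  also have "\<dots> = x"
    using assms by (simp add: deriv_plus_inverse sadj_Pplus)
  finally show ?thesis .
qed

lemma lift_eqI:
  assumes f: "smooth_plus f" "smooth_plus h"
    "\<And>x. x \<in> Vplus A \<Longrightarrow> h (f x) = x" "\<And>x. x \<in> Vplus A \<Longrightarrow> f (h x) = x"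
    and "w \<in> Vminus A" and "sadj \<Omega> (deriv_plus f (Pplus A z)) w = Pminus A z"
  shows "lift \<Omega> A f z = f (Pplus A z) + w"
proof -
  let ?y = "Pplus A z"
  \<comment> \<open>the inverse relation with the roles of \<open>f\<close> and \<open>h\<close> exchanged, at the point \<open>f ?y\<close>\<close>
  have inj: "w' = sadj \<Omega> (deriv_plus h (f ?y)) (sadj \<Omega> (deriv_plus f ?y) w')" if "w' \<in> Vminus A" for w'
    using sadj_deriv_plus_inverse[OF f(2,1) f(4) smooth_plus_Vplus[OF f(1) Pplus_in_Vplus] that] f(3)
    by simp
  have "(THE w'. w' \<in> Vminus A \<and> sadj \<Omega> (deriv_plus f ?y) w' = Pminus A z) = w"
    using assms(5,6) inj by (intro the_equality) metis+
  then show ?thesis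
    unfolding lift_def deriv_plus_def[symmetric] by simp
qed

lemma lift_eq:
  assumes "smooth_plus f" and "smooth_plus h"
    and "\<And>x. x \<in> Vplus A \<Longrightarrow> h (f x) = x" and "\<And>x. x \<in> Vplus A \<Longrightarrow> f (h x) = x"
  shows "lift \<Omega> A f z = f (Pplus A z) + sadj \<Omega> (deriv_plus h (f (Pplus A z))) (Pminus A z)"
  by (rule lift_eqI[OF assms]) (simp_all add: assms sadj_deriv_plus_Vminus smooth_plus_smooth sadj_deriv_plus_inverse)

lemma Diff_plusE:
  assumes "f \<in> Diff_plus A"
  obtains h where "smooth_plus f" and "smooth_plus h"
    and "\<And>x. x \<in> Vplus A \<Longrightarrow> h (f x) = x" and "\<And>x. x \<in> Vplus A \<Longrightarrow> f (h x) = x"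
  using assms unfolding Diff_plus_def smooth_plus_def Pi_def by blast

lemma Diff_plusI:
  assumes "smooth_plus f" and "smooth_plus h" and "f \<in> extensional (Vplus A)"
    and "\<And>x. x \<in> Vplus A \<Longrightarrow> h (f x) = x" and "\<And>x. x \<in> Vplus A \<Longrightarrow> f (h x) = x"
  shows "f \<in> Diff_plus A"
  using assms unfolding Diff_plus_def smooth_plus_def Pi_def by blast

lemma deriv_plus_cong: "(\<And>x. x \<in> Vplus A \<Longrightarrow> g x = f x) \<Longrightarrow> deriv_plus g = deriv_plus f"
proof -
  assume "\<And>x. x \<in> Vplus A \<Longrightarrow> g x = f x"
  then have "g \<circ> Pplus A = f \<circ> Pplus A"
    by (simp add: fun_eq_iff)
  then show ?thesis
    by (intro ext) (simp add: deriv_plus_def)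
qed

lemma smooth_plus_cong: "smooth_plus f \<Longrightarrow> (\<And>x. x \<in> Vplus A \<Longrightarrow> g x = f x) \<Longrightarrow> smooth_plus g"
proof -
  assume "smooth_plus f" "\<And>x. x \<in> Vplus A \<Longrightarrow> g x = f x"
  moreover from this have "g \<circ> Pplus A = f \<circ> Pplus A"
    by (simp add: fun_eq_iff)
  ultimately show "smooth_plus g"
    by (simp add: smooth_plus_def)
qed

lemma smooth_plus_compose:
  assumes "smooth_plus f" and "smooth_plus k"
  shows "smooth_plus (\<lambda>x. f (k x))"
proof -
  have "(\<lambda>x. f (k x)) \<circ> Pplus A = (\<lambda>z. (f \<circ> Pplus A) ((k \<circ> Pplus A) z))"
    using smooth_plus_Vplus[OF assms(2)] by (simp add: fun_eq_iff)
  moreover have "smooth (\<lambda>z. (f \<circ> Pplus A) ((k \<circ> Pplus A) z))"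
    using smooth_compose[OF smooth_plus_smooth smooth_plus_smooth] assms .
  ultimately have "smooth ((\<lambda>x. f (k x)) \<circ> Pplus A)"
    by (simp only:)
  moreover have "\<forall>x\<in>Vplus A. f (k x) \<in> Vplus A"
    using assms by (simp add: smooth_plus_Vplus)
  ultimately show ?thesis
    unfolding smooth_plus_def by blast
qed

lemma restrict_id_Diff_plus: "restrict (\<lambda>x. x) (Vplus A) \<in> Diff_plus A"
proof (rule Diff_plusI)
  have "smooth_plus (\<lambda>x. x)"
    by (simp add: smooth_plus_def o_def smooth_bounded_linear bounded_linear_Pplus)
  then show "smooth_plus (\<lambda>x. x)" and "smooth_plus (restrict (\<lambda>x. x) (Vplus A))"
    by (auto intro: smooth_plus_cong)
qed auto

lemma lift_Vplus: "f \<in> Diff_plus A \<Longrightarrow> x \<in> Vplus A \<Longrightarrow> lift \<Omega> A f x = f x"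
  by (elim Diff_plusE) (simp add: lift_eq linear_0 linear_sadj linear_deriv_plus smooth_plus_smooth)

lemma inj_on_lift: "inj_on (lift \<Omega> A) (Diff_plus A)"
proof (rule inj_onI)
  fix f g
  assume f: "f \<in> Diff_plus A" and g: "g \<in> Diff_plus A" and "lift \<Omega> A f = lift \<Omega> A g"
  then have "f x = g x" if "x \<in> Vplus A" for x
    using lift_Vplus that by metis
  moreover have "f \<in> extensional (Vplus A)" and "g \<in> extensional (Vplus A)"
    using f g by (simp_all add: Diff_plus_def)
  ultimately show "f = g"
    by (intro extensionalityI)
qed

lemma lift_restrict_id: "lift \<Omega> A (restrict (\<lambda>x. x) (Vplus A)) = id"
proof
  fix z
  have "smooth_plus (restrict (\<lambda>x. x) (Vplus A))"
    using restrict_id_Diff_plus by (auto elim: Diff_plusE)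
  then have "lift \<Omega> A (restrict (\<lambda>x. x) (Vplus A)) z
      = Pplus A z + sadj \<Omega> (deriv_plus (restrict (\<lambda>x. x) (Vplus A)) (Pplus A z)) (Pminus A z)"
    by (subst lift_eq[of _ "restrict (\<lambda>x. x) (Vplus A)"]) auto
  also have "deriv_plus (restrict (\<lambda>x. x) (Vplus A)) = deriv_plus (\<lambda>x. x)"
    by (rule deriv_plus_cong) simp
  also have "Pplus A z + sadj \<Omega> (deriv_plus (\<lambda>x. x) (Pplus A z)) (Pminus A z) = z"
    by (simp add: deriv_plus_id sadj_Pplus Pplus_add_Pminus)
  finally show "lift \<Omega> A (restrict (\<lambda>x. x) (Vplus A)) z = id z"
    unfolding id_apply .
qed

lemma Pplus_Vplus_add_Vminus: "y \<in> Vplus A \<Longrightarrow> w \<in> Vminus A \<Longrightarrow> Pplus A (y + w) = y"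
  and Pminus_Vplus_add_Vminus: "y \<in> Vplus A \<Longrightarrow> w \<in> Vminus A \<Longrightarrow> Pminus A (y + w) = w"
  by (simp_all add: P_simps)

lemma lift_compose:
  assumes "f \<in> Diff_plus A" and "k \<in> Diff_plus A"
  shows "lift \<Omega> A (compose (Vplus A) f k) = lift \<Omega> A f \<circ> lift \<Omega> A k"
proof
  fix z
  obtain fi where f: "smooth_plus f" "smooth_plus fi"
    "\<And>x. x \<in> Vplus A \<Longrightarrow> fi (f x) = x" "\<And>x. x \<in> Vplus A \<Longrightarrow> f (fi x) = x"
    using assms(1) by (elim Diff_plusE) blast
  obtain ki where k: "smooth_plus k" "smooth_plus ki"
    "\<And>x. x \<in> Vplus A \<Longrightarrow> ki (k x) = x" "\<And>x. x \<in> Vplus A \<Longrightarrow> k (ki x) = x"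
    using assms(2) by (elim Diff_plusE) blast
  let ?c = "compose (Vplus A) f k" and ?y = "Pplus A z" and ?x = "Pminus A z"
  have c: "?c x = f (k x)" if "x \<in> Vplus A" for x
    using that by (simp add: compose_def)
  have ky: "k ?y \<in> Vplus A"
    using smooth_plus_Vplus[OF k(1)] by simp
  have "smooth_plus ?c"
    using smooth_plus_cong[OF smooth_plus_compose[OF f(1) k(1)]] c by blast
  moreover have "smooth_plus (\<lambda>x. ki (fi x))"
    using smooth_plus_compose[OF k(2) f(2)] .
  moreover have "ki (fi (?c x)) = x" and "?c (ki (fi x)) = x" if "x \<in> Vplus A" for x
    using that f k c smooth_plus_Vplus by auto
  ultimately have "lift \<Omega> A ?c z = ?c ?y + sadj \<Omega> (deriv_plus (\<lambda>x. ki (fi x)) (?c ?y)) ?x"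
    by (rule lift_eq)
  also have "deriv_plus (\<lambda>x. ki (fi x)) (?c ?y)
      = (\<lambda>v. deriv_plus ki (k ?y) (deriv_plus fi (f (k ?y)) v))"
    using deriv_plus_compose[OF k(2) f(2)] c f(3) ky smooth_plus_Vplus[OF f(1) ky] by auto
  also have "sadj \<Omega> \<dots> ?x = sadj \<Omega> (deriv_plus fi (f (k ?y))) (sadj \<Omega> (deriv_plus ki (k ?y)) ?x)"
    using f(2) k(2) by (intro sadj_compose linear_deriv_plus smooth_plus_smooth)
  also have "?c ?y + \<dots> = lift \<Omega> A f (lift \<Omega> A k z)"
    using lift_eq[OF f] lift_eq[OF k] ky c
    by (simp add: sadj_deriv_plus_Vminus smooth_plus_smooth[OF k(2)]
        Pplus_Vplus_add_Vminus Pminus_Vplus_add_Vminus)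
  finally show "lift \<Omega> A ?c z = (lift \<Omega> A f \<circ> lift \<Omega> A k) z"
    by simp
qed

lemma Diff_plus_inverse:
  assumes "f \<in> Diff_plus A"
  obtains g where "g \<in> Diff_plus A"
    and "compose (Vplus A) g f = restrict (\<lambda>x. x) (Vplus A)"
    and "compose (Vplus A) f g = restrict (\<lambda>x. x) (Vplus A)"
proof -
  obtain h where f: "smooth_plus f" "smooth_plus h"
    "\<And>x. x \<in> Vplus A \<Longrightarrow> h (f x) = x" "\<And>x. x \<in> Vplus A \<Longrightarrow> f (h x) = x"
    using assms by (elim Diff_plusE) blast
  have "restrict h (Vplus A) \<in> Diff_plus A"
    using f by (intro Diff_plusI[of _ f]) (auto intro: smooth_plus_cong smooth_plus_Vplus)
  moreover have "compose (Vplus A) (restrict h (Vplus A)) f = restrict (\<lambda>x. x) (Vplus A)"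
    and "compose (Vplus A) f (restrict h (Vplus A)) = restrict (\<lambda>x. x) (Vplus A)"
    using f smooth_plus_Vplus by (auto simp: compose_def restrict_def fun_eq_iff)
  ultimately show ?thesis
    by (rule that)
qed

lemma smooth_sadj_deriv_plus:
  assumes "smooth_plus f" and "smooth_plus h"
  shows "smooth (\<lambda>z. sadj \<Omega> (deriv_plus h (f (Pplus A z))) (Pminus A z))"
proof -
  obtain K where K: "\<And>u y. \<Omega> (K u) y = u \<bullet> y"
    using Omega_riesz by blast
  have "smooth (\<lambda>z. \<Omega> (Pminus A z) (deriv_plus h (f (Pplus A z)) j) *\<^sub>R K j)" for j
  proof -
    have "smooth (\<lambda>z. dir_deriv (h \<circ> Pplus A) j ((f \<circ> Pplus A) z))"
      using smooth_compose[OF smooth_dir_deriv[OF smooth_plus_smooth[OF assms(2)]] smooth_plus_smooth[OF assms(1)]] .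
    then have "smooth (\<lambda>z. deriv_plus h (f (Pplus A z)) j)"
      by (simp add: deriv_plus_def dir_deriv_def)
    then have "smooth (\<lambda>z. \<Omega> (Pminus A z) (deriv_plus h (f (Pplus A z)) j))"
      by (rule smooth_bilinear[OF bounded_bilinear_Omega smooth_bounded_linear[OF bounded_linear_Pminus]])
    then show ?thesis
      by (rule smooth_bilinear[OF bounded_bilinear_scaleR _ smooth_const])
  qed
  then show ?thesis
    using sadj_eq_sum[OF K linear_deriv_plus[OF smooth_plus_smooth[OF assms(2)]]]
    by (simp add: smooth_sum)
qed

lemma smooth_lift: "f \<in> Diff_plus A \<Longrightarrow> smooth (lift \<Omega> A f)"
proof (elim Diff_plusE)
  fix h
  assume f: "smooth_plus f" "smooth_plus h"
    "\<And>x. x \<in> Vplus A \<Longrightarrow> h (f x) = x" "\<And>x. x \<in> Vplus A \<Longrightarrow> f (h x) = x"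
  have "smooth (\<lambda>z. f (Pplus A z) + sadj \<Omega> (deriv_plus h (f (Pplus A z))) (Pminus A z))"
    using smooth_plus_smooth[OF f(1)] smooth_sadj_deriv_plus[OF f(1,2)]
    by (intro smooth_add) (simp_all add: o_def)
  moreover have "lift \<Omega> A f = (\<lambda>z. f (Pplus A z) + sadj \<Omega> (deriv_plus h (f (Pplus A z))) (Pminus A z))"
    using lift_eq[OF f] by blast
  ultimately show "smooth (lift \<Omega> A f)"
    by simp
qed

lemma diffeo_lift: "f \<in> Diff_plus A \<Longrightarrow> diffeo (lift \<Omega> A f)"
proof -
  assume f: "f \<in> Diff_plus A"
  then obtain g where g: "g \<in> Diff_plus A"
    and "compose (Vplus A) g f = restrict (\<lambda>x. x) (Vplus A)"
    and "compose (Vplus A) f g = restrict (\<lambda>x. x) (Vplus A)"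
    by (rule Diff_plus_inverse)
  then have "lift \<Omega> A g \<circ> lift \<Omega> A f = id" and "lift \<Omega> A f \<circ> lift \<Omega> A g = id"
    using lift_compose[OF g f] lift_compose[OF f g] lift_restrict_id by simp_all
  then show ?thesis
    unfolding diffeo_def using smooth_lift f g by blast
qed

lemma has_derivative_Vminus:
  assumes "(Q has_derivative Q') (at z)" and "\<And>x. Q x \<in> Vminus A"
  shows "Q' v \<in> Vminus A"
proof -
  have "(\<lambda>x. Pminus A (Q x)) = Q"
    using assms(2) by simp
  moreover have "((\<lambda>x. Pminus A (Q x)) has_derivative (\<lambda>v. Pminus A (Q' v))) (at z)"
    by (rule bounded_linear.has_derivative[OF bounded_linear_Pminus assms(1)])
  ultimately have "(Q has_derivative (\<lambda>v. Pminus A (Q' v))) (at z)"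
    by (simp only:)
  then have "Q' = (\<lambda>v. Pminus A (Q' v))"
    by (rule has_derivative_unique[OF assms(1)])
  then show ?thesis
    by (metis Pminus_in_Vminus)
qed

lemma pullback_theta_lift:
  assumes "f \<in> Diff_plus A"
  shows "pullback_theta \<Omega> A (lift \<Omega> A f) = theta \<Omega> A"
proof (intro ext)
  fix z v
  obtain h where f: "smooth_plus f" "smooth_plus h"
    "\<And>x. x \<in> Vplus A \<Longrightarrow> h (f x) = x" "\<And>x. x \<in> Vplus A \<Longrightarrow> f (h x) = x"
    using assms by (elim Diff_plusE) blast
  define Q where "Q z = sadj \<Omega> (deriv_plus h (f (Pplus A z))) (Pminus A z)" for z
  define Q' where "Q' = frechet_derivative Q (at z)"
  have lift: "lift \<Omega> A f = (\<lambda>z. (f \<circ> Pplus A) z + Q z)"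
    using lift_eq[OF f] by (simp add: Q_def fun_eq_iff)
  have QV: "Q x \<in> Vminus A" for x
    using sadj_deriv_plus_Vminus[OF smooth_plus_smooth[OF f(2)]] by (simp add: Q_def)
  have "smooth Q"
    unfolding Q_def by (rule smooth_sadj_deriv_plus[OF f(1,2)])
  then have Q': "(Q has_derivative Q') (at z)"
    unfolding Q'_def by (rule smooth_has_derivative)
  have "(lift \<Omega> A f has_derivative (\<lambda>v. deriv_plus f z v + Q' v)) (at z)"
    unfolding lift by (rule has_derivative_add[OF has_derivative_deriv_plus[OF smooth_plus_smooth[OF f(1)]] Q'])
  then have "frechet_derivative (lift \<Omega> A f) (at z) v = deriv_plus f z v + Q' v"
    by (metis frechet_derivative_at)
  moreover have "Pminus A (lift \<Omega> A f z) = Q z"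
    unfolding lift using QV smooth_plus_Vplus[OF f(1) Pplus_in_Vplus]
    by (simp add: Pminus_Vplus_add_Vminus)
  ultimately have "pullback_theta \<Omega> A (lift \<Omega> A f) z v = \<Omega> (Q z) (deriv_plus f z v + Q' v)"
    by (simp add: pullback_theta_eq)
  also have "\<dots> = \<Omega> (Q z) (deriv_plus f z v)"
    using Omega_Vminus[OF QV has_derivative_Vminus[OF Q' QV]] by (simp add: Omega_simps)
  also have "\<dots> = \<Omega> (Q z) (deriv_plus f (Pplus A z) (Pplus A v))"
    using deriv_plus_Pplus[OF smooth_plus_smooth[OF f(1)]] by metis
  also have "\<dots> = \<Omega> (sadj \<Omega> (deriv_plus f (Pplus A z)) (Q z)) (Pplus A v)"
    by (simp add: sadj_adjoint linear_deriv_plus smooth_plus_smooth[OF f(1)])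
  also have "sadj \<Omega> (deriv_plus f (Pplus A z)) (Q z) = Pminus A z"
    unfolding Q_def using f by (simp add: sadj_deriv_plus_inverse)
  also have "\<Omega> (Pminus A z) (Pplus A v) = theta \<Omega> A z v"
    by (simp add: theta_eq Omega_Vminus_left[symmetric])
  finally show "pullback_theta \<Omega> A (lift \<Omega> A f) z v = theta \<Omega> A z v" .
qed

lemma lift_in_Aut: "f \<in> Diff_plus A \<Longrightarrow> lift \<Omega> A f \<in> Aut \<Omega> A"
  by (simp add: Aut_def diffeo_lift pullback_theta_lift)

end

section \<open>Every automorphism of \<open>\<theta>\<^sup>A\<close> is a lift\<close>

locale theta_automorphism = skew_involution +
  fixes G :: "'a \<Rightarrow> 'a"
  assumes G_Aut: "G \<in> Aut \<Omega> A"
begin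

lemma diffeo_G: "diffeo G"
  using G_Aut by (simp add: Aut_def)

lemma smooth_G: "smooth G"
  using diffeo_G by (simp add: diffeo_def)

lemma G_has_derivative: "(G has_derivative (\<lambda>v. dir_deriv G v z)) (at z)"
  using smooth_has_derivative[OF smooth_G] by (simp add: dir_deriv_def[abs_def])

lemma linear_dir_deriv_G: "linear (\<lambda>v. dir_deriv G v z)"
  using G_has_derivative has_derivative_linear by blast

lemma Omega_Pminus_dir_deriv: "\<Omega> (Pminus A (G z)) (dir_deriv G v z) = \<Omega> (Pminus A z) v"
proof -
  have "pullback_theta \<Omega> A G z v = theta \<Omega> A z v"
    using G_Aut by (simp add: Aut_def)
  then show ?thesis
    by (simp add: pullback_theta_eq theta_eq dir_deriv_def)
qed

lemma Omega_eqI_dir_deriv: "(\<And>v. \<Omega> x (dir_deriv G v z) = \<Omega> y (dir_deriv G v z)) \<Longrightarrow> x = y"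
  by (metis Omega_eqI diffeo_dir_deriv_surj[OF diffeo_G])

lemma G_Vplus: "z \<in> Vplus A \<Longrightarrow> G z \<in> Vplus A"
  unfolding Vplus_iff_Pminus
  by (rule Omega_eqI_dir_deriv[where z = z]) (simp add: Omega_Pminus_dir_deriv Omega_simps)

lemma Omega_Pminus_second_deriv:
  "\<Omega> (Pminus A (dir_deriv G u z)) (dir_deriv G v z)
    + \<Omega> (Pminus A (G z)) (dir_deriv (dir_deriv G v) u z) = \<Omega> (Pminus A u) v"
proof -
  have "((\<lambda>z. \<Omega> (Pminus A (G z)) (dir_deriv G v z)) has_derivative
      (\<lambda>u. \<Omega> (Pminus A (G z)) (dir_deriv (dir_deriv G v) u z) + \<Omega> (Pminus A (dir_deriv G u z)) (dir_deriv G v z))) (at z)"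
    using bounded_bilinear.FDERIV[OF bounded_bilinear_Omega
        bounded_linear.has_derivative[OF bounded_linear_Pminus G_has_derivative]
        smooth_has_derivative[OF smooth_dir_deriv[OF smooth_G]]]
    by (simp add: dir_deriv_def[of "dir_deriv G v"])
  moreover have "(\<lambda>z. \<Omega> (Pminus A (G z)) (dir_deriv G v z)) = (\<lambda>z. \<Omega> (Pminus A z) v)"
    by (simp add: Omega_Pminus_dir_deriv)
  moreover have "((\<lambda>z. \<Omega> (Pminus A z) v) has_derivative (\<lambda>u. \<Omega> (Pminus A u) v)) (at z)"
    using bounded_bilinear.FDERIV[OF bounded_bilinear_Omega
        bounded_linear_imp_has_derivative[OF bounded_linear_Pminus] has_derivative_const]
    by (simp add: Omega_simps)
  ultimately have "(\<lambda>u. \<Omega> (Pminus A (G z)) (dir_deriv (dir_deriv G v) u z) + \<Omega> (Pminus A (dir_deriv G u z)) (dir_deriv G v z))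
      = (\<lambda>u. \<Omega> (Pminus A u) v)"
    using has_derivative_unique by (simp only:)
  then show ?thesis
    by (simp add: fun_eq_iff add.commute)
qed

lemma G_symplectic: "\<Omega> (dir_deriv G u z) (dir_deriv G v z) = \<Omega> u v"
proof -
  \<comment> \<open>antisymmetrising in \<open>u, v\<close> cancels the second derivatives and leaves \<open>d\<theta>\<^sup>A = \<Omega>\<close>\<close>
  have "\<Omega> (Pminus A (dir_deriv G u z)) (dir_deriv G v z) - \<Omega> (Pminus A (dir_deriv G v z)) (dir_deriv G u z)
      = \<Omega> (Pminus A u) v - \<Omega> (Pminus A v) u"
    using Omega_Pminus_second_deriv[of u z v]
      Omega_Pminus_second_deriv[of v z u, unfolded dir_deriv_commute[OF smooth_G, of u v z]]
    by linarith
  then show ?thesis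
    by (simp add: Omega_Pminus_skew)
qed

lemma dir_deriv_G_Pminus: "dir_deriv G (Pminus A z) z = Pminus A (G z)"
  by (rule Omega_eqI_dir_deriv[where z = z]) (simp add: G_symplectic Omega_Pminus_dir_deriv)

lemma Pplus_G: "Pplus A (G z) = G (Pplus A z)"
proof -
  define \<gamma> where "\<gamma> t = Pplus A z + t *\<^sub>R Pminus A z" for t :: real
  define \<psi> where "\<psi> t = Pplus A (G (\<gamma> t))" for t
  have \<psi>': "(\<psi> has_derivative (\<lambda>s. s *\<^sub>R Pplus A (dir_deriv G (Pminus A z) (\<gamma> t)))) (at t)" for t
  proof -
    have "(\<gamma> has_derivative (\<lambda>s. s *\<^sub>R Pminus A z)) (at t)"
      unfolding \<gamma>_def by (auto intro!: derivative_eq_intros)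
    from diff_chain_at[OF this G_has_derivative]
    have "((\<lambda>t. G (\<gamma> t)) has_derivative (\<lambda>s. dir_deriv G (s *\<^sub>R Pminus A z) (\<gamma> t))) (at t)"
      by (simp add: o_def)
    from bounded_linear.has_derivative[OF bounded_linear_Pplus this] show ?thesis
      unfolding \<psi>_def by (simp add: linear_scale[OF linear_dir_deriv_G] P_simps)
  qed
  \<comment> \<open>for \<open>t \<noteq> 0\<close>, \<open>Pminus A z = (1/t) *\<^sub>R Pminus A (\<gamma> t)\<close>, which \<open>G'\<close> maps into \<open>Vminus A\<close>\<close>
  have "Pplus A (dir_deriv G (Pminus A z) (\<gamma> t)) = 0" if "t \<noteq> 0" for t
  proof -
    have "Pminus A (\<gamma> t) = t *\<^sub>R Pminus A z"
      by (simp add: \<gamma>_def P_simps)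
    then have scaled: "t *\<^sub>R dir_deriv G (Pminus A z) (\<gamma> t) = Pminus A (G (\<gamma> t))"
      using dir_deriv_G_Pminus[of "\<gamma> t"] by (simp add: linear_scale[OF linear_dir_deriv_G])
    have "dir_deriv G (Pminus A z) (\<gamma> t) = (1 / t) *\<^sub>R Pminus A (G (\<gamma> t))"
      unfolding scaled[symmetric] using that by simp
    then show ?thesis
      by (simp add: P_simps)
  qed
  then have \<psi>'_zero: "(\<psi> has_derivative (\<lambda>s. 0)) (at t within {0..1})" if "t \<in> {0..1} - {0}" for t
    using \<psi>'[of t] that by (auto intro: has_derivative_at_withinI)
  have "continuous_on {0..1} \<psi>"
    using \<psi>' by (meson continuous_at_imp_continuous_on has_derivative_continuous)
  then have "\<psi> 1 = \<psi> 0"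
    using has_derivative_zero_unique_strong_interval[of "{0}" 0 1 \<psi> "\<psi> 0" 1] \<psi>'_zero by simp
  then show ?thesis
    using G_Vplus[OF Pplus_in_Vplus, of z] by (simp add: \<psi>_def \<gamma>_def Pplus_add_Pminus)
qed

lemma smooth_plus_G: "smooth_plus G"
  unfolding smooth_plus_def o_def
  using G_Vplus smooth_compose[OF smooth_G smooth_bounded_linear[OF bounded_linear_Pplus]] by blast

lemma deriv_plus_G: "deriv_plus G (Pplus A z) v = Pplus A (dir_deriv G v z)"
proof -
  have "G \<circ> Pplus A = (\<lambda>z. Pplus A (G z))"
    by (simp add: fun_eq_iff Pplus_G)
  moreover have "((\<lambda>z. Pplus A (G z)) has_derivative (\<lambda>v. Pplus A (dir_deriv G v z))) (at z)"
    by (rule bounded_linear.has_derivative[OF bounded_linear_Pplus G_has_derivative])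
  ultimately have "deriv_plus G z v = Pplus A (dir_deriv G v z)"
    unfolding deriv_plus_def by (metis frechet_derivative_at)
  moreover have "deriv_plus G (Pplus A z) v = deriv_plus G z v"
    using deriv_plus_Pplus[OF smooth_plus_smooth[OF smooth_plus_G], of "Pplus A z" v]
      deriv_plus_Pplus[OF smooth_plus_smooth[OF smooth_plus_G], of z v]
    by simp
  ultimately show ?thesis
    by simp
qed

lemma sadj_deriv_plus_G: "sadj \<Omega> (deriv_plus G (Pplus A z)) (Pminus A (G z)) = Pminus A z"
proof (rule sadj_eqI)
  show "linear (deriv_plus G (Pplus A z))"
    by (rule linear_deriv_plus[OF smooth_plus_smooth[OF smooth_plus_G]])
  fix v
  show "\<Omega> (Pminus A z) v = \<Omega> (Pminus A (G z)) (deriv_plus G (Pplus A z) v)"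
    using Omega_Vminus_left[OF Pminus_in_Vminus, of "G z" "dir_deriv G v z"]
    by (simp add: deriv_plus_G Omega_Pminus_dir_deriv)
qed

lemma restrict_G_Diff_plus: "restrict G (Vplus A) \<in> Diff_plus A"
proof -
  obtain Gi where "smooth Gi" and Gi: "Gi \<circ> G = id" "G \<circ> Gi = id"
    using diffeo_G by (auto simp: diffeo_def)
  have GiV: "Gi y \<in> Vplus A" if "y \<in> Vplus A" for y
  proof -
    have "G (Gi y) = G (Pplus A (Gi y))"
      using Pplus_G[of "Gi y"] that Gi(2) by (simp add: pointfree_idE)
    then have "Gi y = Pplus A (Gi y)"
      using Gi(1) by (metis pointfree_idE)
    then show ?thesis
      by (metis Pplus_in_Vplus)
  qed
  have "smooth_plus Gi"
    unfolding smooth_plus_def o_def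
    using GiV smooth_compose[OF \<open>smooth Gi\<close> smooth_bounded_linear[OF bounded_linear_Pplus]] by blast
  moreover have "smooth_plus (restrict G (Vplus A))"
    using smooth_plus_cong[OF smooth_plus_G] by simp
  ultimately show ?thesis
    using Gi GiV by (intro Diff_plusI[of _ Gi]) (auto simp: pointfree_idE)
qed

lemma lift_restrict_G: "lift \<Omega> A (restrict G (Vplus A)) = G"
proof
  fix z
  obtain h where f: "smooth_plus (restrict G (Vplus A))" "smooth_plus h"
    "\<And>x. x \<in> Vplus A \<Longrightarrow> h (restrict G (Vplus A) x) = x"
    "\<And>x. x \<in> Vplus A \<Longrightarrow> restrict G (Vplus A) (h x) = x"
    using restrict_G_Diff_plus by (elim Diff_plusE) blast
  have "sadj \<Omega> (deriv_plus (restrict G (Vplus A)) (Pplus A z)) (Pminus A (G z)) = Pminus A z"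
    using sadj_deriv_plus_G[of z] deriv_plus_cong[of "restrict G (Vplus A)" G] by simp
  from lift_eqI[OF f Pminus_in_Vminus this]
  have "lift \<Omega> A (restrict G (Vplus A)) z = G (Pplus A z) + Pminus A (G z)"
    by simp
  also have "\<dots> = G z"
    by (simp add: Pplus_G[symmetric] Pplus_add_Pminus)
  finally show "lift \<Omega> A (restrict G (Vplus A)) z = G z" .
qed

end

context skew_involution
begin

lemma lift_image_Diff_plus: "lift \<Omega> A ` Diff_plus A = Aut \<Omega> A"
proof
  show "lift \<Omega> A ` Diff_plus A \<subseteq> Aut \<Omega> A"
    using lift_in_Aut by blast
  show "Aut \<Omega> A \<subseteq> lift \<Omega> A ` Diff_plus A"
  proof
    fix G
    assume "G \<in> Aut \<Omega> A"
    then interpret theta_automorphism \<Omega> A G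
      by unfold_locales
    show "G \<in> lift \<Omega> A ` Diff_plus A"
      using lift_restrict_G restrict_G_Diff_plus by (metis image_eqI)
  qed
qed

end

theorem theorem4:
  fixes \<Omega> :: "'a::euclidean_space \<Rightarrow> 'a \<Rightarrow> real" and A :: "'a \<Rightarrow> 'a"
  assumes "symplectic_form \<Omega>"
    and "linear A"
    and "\<forall>x y. \<Omega> (A x) y + \<Omega> x (A y) = 0"
    and "A \<circ> A = id"
  shows "bij_betw (lift \<Omega> A) (Diff_plus A) (Aut \<Omega> A)
    \<and> (\<forall>f\<in>Diff_plus A. \<forall>h\<in>Diff_plus A.
          lift \<Omega> A (compose (Vplus A) f h) = lift \<Omega> A f \<circ> lift \<Omega> A h)"
proof -
  interpret skew_involution \<Omega> A
    using assms by (intro skew_involution.intro symplectic_space.intro skew_involution_axioms.intro)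
  show ?thesis
    using inj_on_lift lift_image_Diff_plus lift_compose unfolding bij_betw_def by blast
qed

end
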